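(* Let $W:\mathbb{R}^d\times\mathcal{P}_2(\mathbb{R}^d)\to\mathbb{R}^d$ be continuous and suppose there is $\beta>0$ such that for all $X,Y\in L^2(\Omega,\mathbb{R}^d)$, $\mathbb{E}[(W(X,\mathcal{L}(X))-W(Y,\mathcal{L}(Y)))\cdot(X-Y)]\ge\beta\,\mathbb{E}[|W(X,\mathcal{L}(X))-W(Y,\mathcal{L}(Y))|^2]$. Then (i) $\mathbb{E}[|W(X,\mathcal{L}(X))-W(Y,\mathcal{L}(Y))|^2]\le\frac1{\beta^2}\mathbb{E}[|X-Y|^2]$ for all $X,Y\in L^2(\Omega,\mathbb{R}^d)$; and (ii) $\sup_{\mu\in\mathcal{P}_2(\mathbb{R}^d)}\|W(\cdot,\mu)\|_{Lip}\le\frac1\beta$.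
   Context: $(\Omega,\mathcal{A},\mathbb{P})$ is a standard atomless probability space, $\mathcal{L}(X)$ the law of $X$, $\mathcal{P}_2(\mathbb{R}^d)$ with the 2-Wasserstein distance; $\|\cdot\|_{Lip}$ the Lipschitz seminorm in $x$. *)

theory Defs
  imports "HOL-Probability.Probability"
begin

definition atomless :: "'w measure \<Rightarrow> bool" where
  "atomless M \<longleftrightarrow> (\<forall>A\<in>sets M. measure M A > 0 \<longrightarrow>
      (\<exists>B\<in>sets M. B \<subseteq> A \<and> 0 < measure M B \<and> measure M B < measure M A))"

definition P2 :: "'a::euclidean_space measure set" where
  "P2 = {\<mu>. prob_space \<mu> \<and> sets \<mu> = sets borel \<and> integrable \<mu> (\<lambda>x. norm x ^ 2)}"

definition couplings :: "'a::euclidean_space measure \<Rightarrow> 'a measure \<Rightarrow> ('a \<times> 'a) measure set" where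
  "couplings \<mu> \<nu> = {\<pi>. prob_space \<pi> \<and> sets \<pi> = sets (borel :: ('a \<times> 'a) measure) \<and>
      distr \<pi> borel fst = \<mu> \<and> distr \<pi> borel snd = \<nu>}"

text \<open>2-Wasserstein distance (meaningful for measures in P2, where every coupling
  has integrable quadratic cost).\<close>
definition W2 :: "'a::euclidean_space measure \<Rightarrow> 'a measure \<Rightarrow> real" where
  "W2 \<mu> \<nu> = sqrt (INF \<pi>\<in>couplings \<mu> \<nu>. (\<integral>p. (norm (fst p - snd p))\<^sup>2 \<partial>\<pi>))"

text \<open>Continuity of W on R^d x P2 (product of Euclidean and W2 metric topologies),
  expressed sequentially (equivalent for metric spaces).\<close>
definition continuous_W2 :: "('a::euclidean_space \<Rightarrow> 'a measure \<Rightarrow> 'a) \<Rightarrow> bool" where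
  "continuous_W2 W \<longleftrightarrow> (\<forall>x xs \<mu> \<mu>s. \<mu> \<in> P2 \<and> (\<forall>n. \<mu>s n \<in> P2) \<and> xs \<longlonglongrightarrow> x \<and>
      (\<lambda>n. W2 (\<mu>s n) \<mu>) \<longlonglongrightarrow> 0 \<longrightarrow> (\<lambda>n. W (xs n) (\<mu>s n)) \<longlonglongrightarrow> W x \<mu>)"

definition L2 :: "'w measure \<Rightarrow> ('w \<Rightarrow> 'a::euclidean_space) set" where
  "L2 M = {X. X \<in> borel_measurable M \<and> integrable M (\<lambda>\<omega>. (norm (X \<omega>))\<^sup>2)}"

definition law :: "'w measure \<Rightarrow> ('w \<Rightarrow> 'a::euclidean_space) \<Rightarrow> 'a measure" where
  "law M X = distr M borel X"

end

theory Submission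
  imports Defs
begin

text \<open>
  Part (i) is Cauchy-Schwarz and Young's inequality under the expectation.

  For (ii) fix \<open>x\<close>, \<open>y\<close> and let \<open>\<mu>\<close> first be the law of a simple random variable \<open>X\<^sub>0\<close>.
  Replace \<open>X\<^sub>0\<close> by the constant \<open>x\<close>, resp. \<open>y\<close>, on an event \<open>A\<close> of small positive
  probability. Off \<open>A\<close> the two perturbations agree, so the cocoercivity inequality gives
  \<open>\<beta> P(A) |\<Delta>|\<^sup>2 \<le> P(A) \<Delta> \<bullet> (x - y)\<close>, where \<open>\<Delta>\<close> is the difference of \<open>W(x, \<cdot>)\<close> and
  \<open>W(y, \<cdot>)\<close> at the perturbed laws. As \<open>P(A) \<rightarrow> 0\<close> these laws tend to \<open>\<mu>\<close> in \<open>W\<^sub>2\<close>, and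
  continuity of \<open>W\<close> yields \<open>\<beta> |\<Delta>|\<^sup>2 \<le> \<Delta> \<bullet> (x - y)\<close> for \<open>\<Delta> = W(x,\<mu>) - W(y,\<mu>)\<close>, hence
  \<open>|\<Delta>| \<le> |x - y| / \<beta>\<close>. A general \<open>\<mu> \<in> P\<^sub>2\<close> is the \<open>W\<^sub>2\<close>-limit of laws of simple
  random variables on \<open>\<Omega>\<close>; these exist because an atomless probability measure takes
  every value between 0 and the measure of a set on its subsets (Sierpinski).
\<close>

lemma inner_le_Young:
  fixes u v :: "'a::real_inner"
  assumes "\<beta> > 0"
  shows "u \<bullet> v \<le> (\<beta> * (norm u)\<^sup>2 + (norm v)\<^sup>2 / \<beta>) / 2"
proof -
  have "2 * \<beta> * (norm u * norm v) \<le> \<beta>\<^sup>2 * (norm u)\<^sup>2 + (norm v)\<^sup>2"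
    using zero_le_square[of "\<beta> * norm u - norm v"] by (simp add: power2_eq_square algebra_simps)
  then have "norm u * norm v \<le> (\<beta> * (norm u)\<^sup>2 + (norm v)\<^sup>2 / \<beta>) / 2"
    using assms by (simp add: field_simps power2_eq_square)
  then show ?thesis using norm_cauchy_schwarz[of u v] by linarith
qed

lemma cocoercive_norm_le:
  fixes d v :: "'a::real_inner"
  assumes "\<beta> > 0" and "\<beta> * (norm d)\<^sup>2 \<le> d \<bullet> v"
  shows "norm d \<le> 1 / \<beta> * norm v"
proof -
  have "norm d * (\<beta> * norm d) \<le> norm d * norm v"
    using assms(2) norm_cauchy_schwarz[of d v] by (simp add: power2_eq_square algebra_simps)
  then have "\<beta> * norm d \<le> norm v" if "norm d \<noteq> 0"
    using that by (simp add: mult_le_cancel_left)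
  then show ?thesis using assms(1) by (cases "norm d = 0") (auto simp: field_simps)
qed

lemma cocoercive_integral_norm_sq_le:
  fixes D E :: "'w \<Rightarrow> 'a::euclidean_space"
  assumes "\<beta> > 0"
    and cocoercive: "\<beta> * (\<integral>\<omega>. (norm (D \<omega>))\<^sup>2 \<partial>M) \<le> (\<integral>\<omega>. D \<omega> \<bullet> E \<omega> \<partial>M)"
    and E: "integrable M (\<lambda>\<omega>. (norm (E \<omega>))\<^sup>2)"
  shows "(\<integral>\<omega>. (norm (D \<omega>))\<^sup>2 \<partial>M) \<le> 1 / \<beta>\<^sup>2 * (\<integral>\<omega>. (norm (E \<omega>))\<^sup>2 \<partial>M)"
proof -
  define A where "A = (\<integral>\<omega>. (norm (D \<omega>))\<^sup>2 \<partial>M)"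
  define B where "B = (\<integral>\<omega>. (norm (E \<omega>))\<^sup>2 \<partial>M)"
  have "B \<ge> 0" unfolding B_def by (rule integral_nonneg_AE) auto
  have "\<beta> * A \<le> (\<beta> * A + B / \<beta>) / 2"
  proof (cases "integrable M (\<lambda>\<omega>. (norm (D \<omega>))\<^sup>2) \<and> integrable M (\<lambda>\<omega>. D \<omega> \<bullet> E \<omega>)")
    case True
    have "\<beta> * A \<le> (\<integral>\<omega>. D \<omega> \<bullet> E \<omega> \<partial>M)" using cocoercive by (simp add: A_def)
    also have "\<dots> \<le> (\<integral>\<omega>. (\<beta> * (norm (D \<omega>))\<^sup>2 + (norm (E \<omega>))\<^sup>2 / \<beta>) / 2 \<partial>M)"
      using True E inner_le_Young[OF \<open>\<beta> > 0\<close>] by (intro integral_mono) auto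
    also have "\<dots> = (\<beta> * A + B / \<beta>) / 2"
      using True E by (simp add: A_def B_def)
    finally show ?thesis .
  next
    case False
    \<comment> \<open>non-integrable functions have integral 0, so \<open>A = 0\<close> or \<open>\<beta> * A \<le> 0\<close>\<close>
    then have "A \<le> 0"
      using cocoercive \<open>\<beta> > 0\<close> by (auto simp: A_def not_integrable_integral_eq mult_le_0_iff)
    moreover have "A \<ge> 0" unfolding A_def by (rule integral_nonneg_AE) auto
    ultimately show ?thesis using \<open>B \<ge> 0\<close> \<open>\<beta> > 0\<close> by simp
  qed
  then have "\<beta> * \<beta> * A \<le> B" using \<open>\<beta> > 0\<close> by (simp add: field_simps)
  then show ?thesis using \<open>\<beta> > 0\<close> by (simp add: A_def B_def field_simps power2_eq_square)
qed

lemma integrable_norm_diff_sq_L2: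
  fixes X Y :: "'w \<Rightarrow> 'a::euclidean_space"
  assumes "X \<in> L2 M" "Y \<in> L2 M"
  shows "integrable M (\<lambda>\<omega>. (norm (X \<omega> - Y \<omega>))\<^sup>2)"
proof (rule Bochner_Integration.integrable_bound)
  show "integrable M (\<lambda>\<omega>. 2 * (norm (X \<omega>))\<^sup>2 + 2 * (norm (Y \<omega>))\<^sup>2)"
    using assms by (auto simp: L2_def)
  show "(\<lambda>\<omega>. (norm (X \<omega> - Y \<omega>))\<^sup>2) \<in> borel_measurable M"
    using assms by (auto simp: L2_def)
  have "(norm (u - v))\<^sup>2 \<le> 2 * (norm u)\<^sup>2 + 2 * (norm v)\<^sup>2" for u v :: 'a
  proof -
    have "(norm (u - v))\<^sup>2 \<le> (norm u + norm v)\<^sup>2"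
      by (intro power_mono norm_triangle_ineq4) auto
    also have "\<dots> \<le> 2 * (norm u)\<^sup>2 + 2 * (norm v)\<^sup>2"
      using zero_le_square[of "norm u - norm v"] by (simp add: power2_eq_square algebra_simps)
    finally show ?thesis .
  qed
  then show "AE \<omega> in M. norm ((norm (X \<omega> - Y \<omega>))\<^sup>2) \<le> norm (2 * (norm (X \<omega>))\<^sup>2 + 2 * (norm (Y \<omega>))\<^sup>2)"
    by simp
qed

lemma emeasure_distr_finite_range:
  fixes g :: "'a \<Rightarrow> 'b::t1_space"
  assumes g: "g \<in> borel_measurable N" and V: "finite V" "g ` space N \<subseteq> V" and B: "B \<in> sets borel"
  shows "emeasure (distr N borel g) B = (\<Sum>v\<in>V \<inter> B. emeasure N (g -` {v} \<inter> space N))"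
proof -
  have "emeasure (distr N borel g) B = emeasure N (g -` B \<inter> space N)"
    by (rule emeasure_distr[OF g B])
  also have "g -` B \<inter> space N = (\<Union>v\<in>V \<inter> B. g -` {v} \<inter> space N)"
    using V(2) by auto
  also have "emeasure N \<dots> = (\<Sum>v\<in>V \<inter> B. emeasure N (g -` {v} \<inter> space N))"
    using g V(1) by (intro sum_emeasure[symmetric]) (auto simp: disjoint_family_on_def)
  finally show ?thesis .
qed

lemma distr_eq_finite_range:
  fixes X :: "'a \<Rightarrow> 'c::t1_space" and g :: "'b \<Rightarrow> 'c"
  assumes X: "X \<in> borel_measurable M" and g: "g \<in> borel_measurable N"
    and V: "finite V" "X ` space M \<subseteq> V" "g ` space N \<subseteq> V"
    and cells: "\<And>v. v \<in> V \<Longrightarrow> emeasure M (X -` {v} \<inter> space M) = emeasure N (g -` {v} \<inter> space N)"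
  shows "distr M borel X = distr N borel g"
proof (rule measure_eqI)
  fix B :: "'c set" assume "B \<in> sets (distr M borel X)"
  then have B: "B \<in> sets borel" by simp
  show "emeasure (distr M borel X) B = emeasure (distr N borel g) B"
    using cells
    by (simp add: emeasure_distr_finite_range[OF X V(1,2) B] emeasure_distr_finite_range[OF g V(1,3) B])
qed simp

lemma simple_function_of_partition:
  fixes V :: "'b::euclidean_space set"
  assumes V: "finite V" and E: "\<And>v. v \<in> V \<Longrightarrow> E v \<in> sets M" "disjoint_family_on E V"
    "(\<Union>v\<in>V. E v) = space M"
  obtains X where "simple_function M X" "X ` space M \<subseteq> V" "\<And>v. v \<in> V \<Longrightarrow> X -` {v} \<inter> space M = E v"
proof -
  define X where "X \<omega> = (\<Sum>v\<in>V. indicator (E v) \<omega> *\<^sub>R v)" for \<omega>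
  have X_cell: "X \<omega> = v" if "v \<in> V" "\<omega> \<in> E v" for v \<omega>
  proof -
    have "X \<omega> = indicator (E v) \<omega> *\<^sub>R v + (\<Sum>u\<in>V - {v}. indicator (E u) \<omega> *\<^sub>R u)"
      unfolding X_def by (rule sum.remove[OF V that(1)])
    also have "(\<Sum>u\<in>V - {v}. indicator (E u) \<omega> *\<^sub>R u) = 0"
      using E(2) that unfolding disjoint_family_on_def by (intro sum.neutral) (auto simp: indicator_def)
    finally show ?thesis using that by simp
  qed
  have X_range: "X ` space M \<subseteq> V" using E(3) X_cell by blast
  have "X \<in> borel_measurable M"
    unfolding X_def using E(1) by (intro borel_measurable_sum borel_measurable_scaleR) auto
  then have simple: "simple_function M X"
    using X_range V by (intro simple_function_borel_measurable) (auto intro: finite_subset)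
  have preimage: "X -` {v} \<inter> space M = E v" if "v \<in> V" for v
  proof (intro equalityI subsetI)
    fix \<omega> assume "\<omega> \<in> X -` {v} \<inter> space M"
    then obtain u where "u \<in> V" "\<omega> \<in> E u" "X \<omega> = v" using E(3) by auto
    then show "\<omega> \<in> E v" using X_cell by auto
  next
    fix \<omega> assume "\<omega> \<in> E v"
    then show "\<omega> \<in> X -` {v} \<inter> space M" using that E(3) X_cell by auto
  qed
  show ?thesis by (rule that[OF simple X_range preimage])
qed

lemma simple_function_approx_L2:
  fixes f :: "'b \<Rightarrow> 'a::euclidean_space"
  assumes f: "f \<in> borel_measurable N" and f2: "integrable N (\<lambda>z. (norm (f z))\<^sup>2)"
  obtains F where "\<And>i. simple_function N (F i)" "(\<lambda>i. \<integral>z. (norm (F i z - f z))\<^sup>2 \<partial>N) \<longlonglongrightarrow> 0"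
proof -
  obtain F where F: "\<And>i. simple_function N (F i)"
    "\<And>z. z \<in> space N \<Longrightarrow> (\<lambda>i. F i z) \<longlonglongrightarrow> f z"
    "\<And>i z. z \<in> space N \<Longrightarrow> dist (F i z) 0 \<le> 2 * dist (f z) 0"
    using borel_measurable_implies_sequence_metric[OF f, of 0] by blast
  have "(\<lambda>i. \<integral>z. (norm (F i z - f z))\<^sup>2 \<partial>N) \<longlonglongrightarrow> (\<integral>z. 0 \<partial>N)"
  proof (rule integral_dominated_convergence[where w = "\<lambda>z. 9 * (norm (f z))\<^sup>2"])
    show "(\<lambda>z. (norm (F i z - f z))\<^sup>2) \<in> borel_measurable N" for i
      using borel_measurable_simple_function[OF F(1)] f by measurable
    show "integrable N (\<lambda>z. 9 * (norm (f z))\<^sup>2)" using f2 by simp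
    show "AE z in N. (\<lambda>i. (norm (F i z - f z))\<^sup>2) \<longlonglongrightarrow> 0"
    proof (rule AE_I2)
      fix z assume "z \<in> space N"
      then have "(\<lambda>i. norm (F i z - f z)) \<longlonglongrightarrow> 0"
        using F(2) by (simp add: tendsto_norm_zero_iff LIM_zero_iff)
      from tendsto_power[OF this, of 2] show "(\<lambda>i. (norm (F i z - f z))\<^sup>2) \<longlonglongrightarrow> 0"
        by simp
    qed
    show "AE z in N. norm ((norm (F i z - f z))\<^sup>2) \<le> 9 * (norm (f z))\<^sup>2" for i
    proof (rule AE_I2)
      fix z assume "z \<in> space N"
      then have "norm (F i z - f z) \<le> 3 * norm (f z)"
        using F(3)[of z i] norm_triangle_ineq4[of "F i z" "f z"] by simp
      then have "(norm (F i z - f z))\<^sup>2 \<le> (3 * norm (f z))\<^sup>2"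
        by (rule power_mono) simp
      then show "norm ((norm (F i z - f z))\<^sup>2) \<le> 9 * (norm (f z))\<^sup>2"
        by (simp add: power_mult_distrib)
    qed
  qed simp
  then show ?thesis using that[OF F(1)] by simp
qed

context prob_space
begin

lemma simple_function_integrable:
  fixes f :: "'a \<Rightarrow> 'b::{banach, second_countable_topology}"
  assumes "simple_function M f"
  shows "integrable M f"
  using assms by (intro integrable_simple_function) (simp_all add: emeasure_eq_measure)

lemma simple_function_L2:
  fixes X :: "'a \<Rightarrow> 'b::euclidean_space"
  assumes "simple_function M X"
  shows "X \<in> L2 M"
  using simple_function_integrable[OF simple_function_compose1[OF assms, of "\<lambda>x. (norm x)\<^sup>2"]]
    borel_measurable_simple_function[OF assms]
  by (simp add: L2_def)

lemma law_in_P2: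
  fixes X :: "'a \<Rightarrow> 'b::euclidean_space"
  assumes "X \<in> L2 M"
  shows "law M X \<in> P2"
proof -
  have [measurable]: "X \<in> borel_measurable M" using assms by (simp add: L2_def)
  have "integrable (distr M borel X) (\<lambda>x. (norm x)\<^sup>2)"
    using assms by (subst integrable_distr_eq) (auto simp: L2_def)
  then show ?thesis unfolding P2_def law_def
    using prob_space_distr[of X borel] by auto
qed

subsection \<open>Atomless probability spaces\<close>

lemma exists_subevent_near_sup:
  assumes "A \<in> events" and "0 \<le> s"
  shows "\<exists>C\<in>events. C \<subseteq> A \<and> prob C \<le> s \<and>
    (\<forall>D\<in>events. D \<subseteq> A \<and> prob D \<le> s \<longrightarrow> prob D \<le> 2 * prob C)"
proof -
  define Q where "Q = {prob D | D. D \<in> events \<and> D \<subseteq> A \<and> prob D \<le> s}"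
  have "bdd_above Q" unfolding Q_def by (intro bdd_aboveI[of _ 1]) auto
  then have Q_upper: "prob D \<le> Sup Q" if "D \<in> events" "D \<subseteq> A" "prob D \<le> s" for D
    using that by (intro cSup_upper) (auto simp: Q_def)
  show ?thesis
  proof (cases "Sup Q \<le> 0")
    case True
    then have "prob D \<le> 2 * prob {}" if "D \<in> events" "D \<subseteq> A" "prob D \<le> s" for D
      using Q_upper[OF that] by simp
    then show ?thesis using assms by (intro bexI[of _ "{}"]) auto
  next
    case False
    have "Q \<noteq> {}" using assms unfolding Q_def by (auto intro!: exI[of _ "{}"])
    have "Sup Q / 2 < Sup Q" using False by simp
    then obtain q where "q \<in> Q" "Sup Q / 2 < q" using \<open>Q \<noteq> {}\<close> by (rule less_cSupE)
    then obtain C where C: "C \<in> events" "C \<subseteq> A" "prob C \<le> s" "Sup Q / 2 < prob C"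
      unfolding Q_def by blast
    then have "prob D \<le> 2 * prob C" if "D \<in> events" "D \<subseteq> A" "prob D \<le> s" for D
      using Q_upper[OF that] by simp
    with C show ?thesis by blast
  qed
qed

lemma atomless_small_subevent:
  assumes "atomless M" and A: "A \<in> events" "prob A > 0" and "\<delta> > 0"
  shows "\<exists>B\<in>events. B \<subseteq> A \<and> 0 < prob B \<and> prob B \<le> \<delta>"
proof -
  have "\<exists>B\<in>events. B \<subseteq> A \<and> 0 < prob B \<and> prob B \<le> prob A / 2 ^ n" for n
  proof (induction n)
    case 0
    then show ?case using A by auto
  next
    case (Suc n)
    then obtain B where B: "B \<in> events" "B \<subseteq> A" "0 < prob B" "prob B \<le> prob A / 2 ^ n"
      by blast
    with \<open>atomless M\<close> obtain C where C: "C \<in> events" "C \<subseteq> B" "0 < prob C" "prob C < prob B"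
      unfolding atomless_def by blast
    have Diff: "prob (B - C) = prob B - prob C" using B C by (simp add: finite_measure_Diff)
    show ?case
    proof (cases "prob C \<le> prob B / 2")
      case True
      then show ?thesis using B C by (intro bexI[of _ C]) auto
    next
      case False
      then show ?thesis using B C Diff by (intro bexI[of _ "B - C"]) auto
    qed
  qed
  moreover obtain n where "(1 / 2 :: real) ^ n < \<delta>"
    using real_arch_pow_inv[OF \<open>\<delta> > 0\<close>, of "1 / 2"] by auto
  moreover have "prob A / 2 ^ n \<le> (1 / 2 :: real) ^ n"
    using prob_le_1[of A] by (simp add: power_one_over divide_right_mono)
  ultimately show ?thesis by (meson order.trans less_imp_le)
qed

lemma atomless_events_prob_tendsto_0:
  assumes "atomless M"
  obtains A where "\<And>n. A n \<in> events" "\<And>n. 0 < prob (A n)" "(\<lambda>n. prob (A n)) \<longlonglongrightarrow> 0"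
proof -
  have "\<exists>A\<in>events. 0 < prob A \<and> prob A \<le> inverse (real (Suc n))" for n
  proof -
    obtain A where "A \<in> events" "0 < prob A" "prob A \<le> inverse (real (Suc n))"
      using atomless_small_subevent[OF \<open>atomless M\<close>, of "space M" "inverse (real (Suc n))"]
      by (auto simp: prob_space)
    then show ?thesis by (intro bexI[of _ A]) simp_all
  qed
  then obtain A where A: "\<And>n. A n \<in> events" "\<And>n. 0 < prob (A n)"
    "\<And>n. prob (A n) \<le> inverse (real (Suc n))"
    by metis
  have "(\<lambda>n. prob (A n)) \<longlonglongrightarrow> 0"
  proof (rule real_tendsto_sandwich[of "\<lambda>_. 0" _ _ "\<lambda>n. inverse (real (Suc n))"])
    show "\<forall>\<^sub>F n in sequentially. prob (A n) \<le> inverse (real (Suc n))" using A(3) by simp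
    show "(\<lambda>n. inverse (real (Suc n))) \<longlonglongrightarrow> 0" by (rule LIMSEQ_inverse_real_of_nat)
  qed simp_all
  with A(1,2) show ?thesis by (rule that)
qed

lemma greedy_subevent_sequence:
  assumes S: "S \<in> events" and "0 \<le> t"
  obtains B where "incseq B" "\<And>n. B n \<in> events" "\<And>n. B n \<subseteq> S" "\<And>n. prob (B n) \<le> t"
    "\<And>n D. D \<in> events \<Longrightarrow> D \<subseteq> S - B n \<Longrightarrow> prob D \<le> t - prob (B n) \<Longrightarrow>
      prob D \<le> 2 * (prob (B (Suc n)) - prob (B n))"
proof -
  define ok where "ok C \<longleftrightarrow> C \<in> events \<and> C \<subseteq> S \<and> prob C \<le> t" for C
  define greedy where "greedy C C' \<longleftrightarrow> C' \<in> events \<and> C' \<subseteq> S - C \<and> prob C' \<le> t - prob C \<and>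
      (\<forall>D\<in>events. D \<subseteq> S - C \<and> prob D \<le> t - prob C \<longrightarrow> prob D \<le> 2 * prob C')" for C C'
  have "\<exists>C'. greedy C C'" if "ok C" for C
    using that S exists_subevent_near_sup[of "S - C" "t - prob C"] unfolding ok_def greedy_def by auto
  then obtain f where f: "\<And>C. ok C \<Longrightarrow> greedy C (f C)" by metis
  define B where "B = rec_nat {} (\<lambda>_ C. C \<union> f C)"
  have B_0: "B 0 = {}" and B_Suc: "B (Suc n) = B n \<union> f (B n)" for n
    by (simp_all add: B_def)
  have prob_union: "prob (C \<union> f C) = prob C + prob (f C)" if "ok C" for C
    using f[OF that] that unfolding greedy_def ok_def by (intro finite_measure_Union) auto
  have ok_B: "ok (B n)" for n
  proof (induction n)
    case 0
    then show ?case using \<open>0 \<le> t\<close> by (simp add: ok_def B_0)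
  next
    case (Suc n)
    then show ?case using f[OF Suc] prob_union[OF Suc] unfolding greedy_def ok_def B_Suc by auto
  qed
  show ?thesis
  proof (rule that)
    show "incseq B" by (auto simp: incseq_Suc_iff B_Suc)
    show "B n \<in> events" "B n \<subseteq> S" "prob (B n) \<le> t" for n
      using ok_B[of n] by (auto simp: ok_def)
    show "prob D \<le> 2 * (prob (B (Suc n)) - prob (B n))"
      if "D \<in> events" "D \<subseteq> S - B n" "prob D \<le> t - prob (B n)" for n D
      using f[OF ok_B[of n]] prob_union[OF ok_B[of n]] that unfolding greedy_def B_Suc by auto
  qed
qed

lemma atomless_subevent_with_prob:
  assumes "atomless M" and S: "S \<in> events" and t: "0 \<le> t" "t \<le> prob S"
  shows "\<exists>E\<in>events. E \<subseteq> S \<and> prob E = t"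
proof -
  obtain B where B: "incseq B" "\<And>n. B n \<in> events" "\<And>n. B n \<subseteq> S" "\<And>n. prob (B n) \<le> t"
    "\<And>n D. D \<in> events \<Longrightarrow> D \<subseteq> S - B n \<Longrightarrow> prob D \<le> t - prob (B n) \<Longrightarrow>
      prob D \<le> 2 * (prob (B (Suc n)) - prob (B n))"
    using greedy_subevent_sequence[OF S t(1)] by blast
  define U where "U = (\<Union>n. B n)"
  have U: "U \<in> events" "U \<subseteq> S" using B(2,3) unfolding U_def by auto
  have lim: "(\<lambda>n. prob (B n)) \<longlonglongrightarrow> prob U"
    unfolding U_def using B(1,2) by (intro finite_Lim_measure_incseq) auto
  then have "prob U \<le> t" using B(4) by (intro LIMSEQ_le_const2) auto
  moreover have "\<not> prob U < t"
  proof
    assume "prob U < t"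
    moreover have "prob (S - U) = prob S - prob U" using S U by (simp add: finite_measure_Diff)
    ultimately obtain D where D: "D \<in> events" "D \<subseteq> S - U" "0 < prob D" "prob D \<le> t - prob U"
      using atomless_small_subevent[OF \<open>atomless M\<close>, of "S - U" "t - prob U"] S U t by auto
    \<comment> \<open>\<open>D\<close> stays a candidate at every greedy step, while the steps become arbitrarily small\<close>
    have "prob D \<le> 2 * (prob (B (Suc n)) - prob (B n))" for n
    proof (rule B(5)[OF D(1)])
      show "D \<subseteq> S - B n" using D(2) unfolding U_def by auto
      have "prob (B n) \<le> prob U" using B(2) U unfolding U_def by (intro finite_measure_mono) auto
      then show "prob D \<le> t - prob (B n)" using D(4) by simp
    qed
    moreover have "(\<lambda>n. 2 * (prob (B (Suc n)) - prob (B n))) \<longlonglongrightarrow> 2 * (prob U - prob U)"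
      using lim by (intro tendsto_intros LIMSEQ_Suc)
    ultimately have "prob D \<le> 0" by (intro LIMSEQ_le_const) auto
    with D(3) show False by simp
  qed
  ultimately show ?thesis using U by (intro bexI[of _ U]) auto
qed

lemma atomless_partition:
  assumes "atomless M" and "finite V" "V \<noteq> {}"
    and "S \<in> events" "\<And>v. v \<in> V \<Longrightarrow> 0 \<le> p v" "(\<Sum>v\<in>V. p v) = prob S"
  shows "\<exists>E. (\<forall>v\<in>V. E v \<in> events \<and> prob (E v) = p v) \<and> disjoint_family_on E V \<and>
    (\<Union>v\<in>V. E v) = S"
  using assms(2-)
proof (induction V arbitrary: S rule: finite_ne_induct)
  case (singleton a)
  then show ?case by (intro exI[of _ "\<lambda>_. S"]) (auto simp: disjoint_family_on_def)
next
  case (insert a V)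
  have "0 \<le> (\<Sum>v\<in>V. p v)" using insert by (intro sum_nonneg) auto
  then obtain Ea where Ea: "Ea \<in> events" "Ea \<subseteq> S" "prob Ea = p a"
    using atomless_subevent_with_prob[OF \<open>atomless M\<close> \<open>S \<in> events\<close>, of "p a"] insert by auto
  have "(\<Sum>v\<in>V. p v) = prob (S - Ea)"
    using Ea insert by (simp add: finite_measure_Diff)
  then have "\<exists>E. (\<forall>v\<in>V. E v \<in> events \<and> prob (E v) = p v) \<and> disjoint_family_on E V \<and>
      (\<Union>v\<in>V. E v) = S - Ea"
    using insert.prems(1,2) Ea(1) by (intro insert.IH) auto
  then obtain E where E: "\<forall>v\<in>V. E v \<in> events \<and> prob (E v) = p v"
      "disjoint_family_on E V" "(\<Union>v\<in>V. E v) = S - Ea"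
    by blast
  have "disjoint_family_on E V" using E(2) .
  then have "disjoint_family_on (E(a := Ea)) V"
    using \<open>a \<notin> V\<close> by (auto simp: disjoint_family_on_def)
  then have "disjoint_family_on (E(a := Ea)) (insert a V)"
    using E(3) \<open>a \<notin> V\<close> by (subst disjoint_family_on_insert) auto
  moreover have "(\<Union>v\<in>insert a V. (E(a := Ea)) v) = S"
    using E(3) Ea \<open>a \<notin> V\<close> by (auto split: if_splits)
  moreover have "\<forall>v\<in>insert a V. (E(a := Ea)) v \<in> events \<and> prob ((E(a := Ea)) v) = p v"
    using E(1) Ea by auto
  ultimately show ?case by blast
qed

lemma atomless_distr_simple_function:
  fixes g :: "'b \<Rightarrow> 'c::euclidean_space"
  assumes "atomless M" and N: "prob_space N" and g: "simple_function N g"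
  shows "\<exists>X. simple_function M X \<and> distr M borel X = distr N borel g"
proof -
  interpret N: prob_space N by (rule N)
  define V where "V = g ` space N"
  have V: "finite V" "V \<noteq> {}" using g N.not_empty unfolding V_def simple_function_def by auto
  define p where "p v = N.prob (g -` {v} \<inter> space N)" for v
  have "(\<Sum>v\<in>V. p v) = N.prob (\<Union>v\<in>V. g -` {v} \<inter> space N)"
    unfolding p_def using V(1) g
    by (intro N.finite_measure_finite_Union[symmetric]) (auto simp: disjoint_family_on_def)
  also have "(\<Union>v\<in>V. g -` {v} \<inter> space N) = space N" unfolding V_def by auto
  finally have "(\<Sum>v\<in>V. p v) = prob (space M)" by (simp add: N.prob_space prob_space)
  then obtain E where E: "\<forall>v\<in>V. E v \<in> events \<and> prob (E v) = p v"
      "disjoint_family_on E V" "(\<Union>v\<in>V. E v) = space M"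
    using atomless_partition[OF \<open>atomless M\<close> V, of "space M" p] by (auto simp: p_def)
  have E_sets: "E v \<in> sets M" if "v \<in> V" for v using E(1) that by simp
  obtain X where X: "simple_function M X" "X ` space M \<subseteq> V"
      "\<And>v. v \<in> V \<Longrightarrow> X -` {v} \<inter> space M = E v"
    using simple_function_of_partition[OF V(1) E_sets E(2,3)] by blast
  have "distr M borel X = distr N borel g"
  proof (rule distr_eq_finite_range[OF _ _ V(1) X(2)])
    show "X \<in> borel_measurable M" "g \<in> borel_measurable N"
      using X(1) g by (simp_all add: borel_measurable_simple_function)
    show "g ` space N \<subseteq> V" by (simp add: V_def)
    show "emeasure M (X -` {v} \<inter> space M) = emeasure N (g -` {v} \<inter> space N)" if "v \<in> V" for v
      using E(1) g that by (simp add: X(3) emeasure_eq_measure N.emeasure_eq_measure p_def)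
  qed
  with X(1) show ?thesis by blast
qed

end

subsection \<open>The Wasserstein distance\<close>

lemma W2_distr_le:
  fixes X Z :: "'b \<Rightarrow> 'a::euclidean_space"
  assumes N: "prob_space N" and [measurable]: "X \<in> borel_measurable N" "Z \<in> borel_measurable N"
  shows "W2 (distr N borel X) (distr N borel Z) \<le> sqrt (\<integral>\<omega>. (norm (X \<omega> - Z \<omega>))\<^sup>2 \<partial>N)"
    and "0 \<le> W2 (distr N borel X) (distr N borel Z)"
proof -
  define \<pi> where "\<pi> = distr N (borel :: ('a \<times> 'a) measure) (\<lambda>\<omega>. (X \<omega>, Z \<omega>))"
  have [measurable]: "fst \<in> borel_measurable (borel :: ('a \<times> 'a) measure)"
    "snd \<in> borel_measurable (borel :: ('a \<times> 'a) measure)"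
    by (intro borel_measurable_continuous_onI continuous_intros)+
  have pair_meas[measurable]: "(\<lambda>\<omega>. (X \<omega>, Z \<omega>)) \<in> N \<rightarrow>\<^sub>M (borel :: ('a \<times> 'a) measure)" by measurable
  have coupling: "\<pi> \<in> couplings (distr N borel X) (distr N borel Z)"
    unfolding couplings_def
  proof (intro CollectI conjI)
    show "prob_space \<pi>" unfolding \<pi>_def using N pair_meas by (rule prob_space.prob_space_distr)
    show "sets \<pi> = sets borel" unfolding \<pi>_def by simp
    show "distr \<pi> borel fst = distr N borel X" unfolding \<pi>_def
      by (subst distr_distr) (auto simp: comp_def)
    show "distr \<pi> borel snd = distr N borel Z" unfolding \<pi>_def
      by (subst distr_distr) (auto simp: comp_def)
  qed
  have integral_\<pi>: "(\<integral>p. (norm (fst p - snd p))\<^sup>2 \<partial>\<pi>) = (\<integral>\<omega>. (norm (X \<omega> - Z \<omega>))\<^sup>2 \<partial>N)"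
    unfolding \<pi>_def by (subst integral_distr) auto
  have nonneg: "0 \<le> (\<integral>p. (norm (fst p - snd p))\<^sup>2 \<partial>\<rho>)" for \<rho> :: "('a \<times> 'a) measure"
    by (rule Bochner_Integration.integral_nonneg) auto
  have bdd: "bdd_below ((\<lambda>\<rho>. \<integral>p. (norm (fst p - snd p))\<^sup>2 \<partial>\<rho>) ` couplings (distr N borel X) (distr N borel Z))"
    using nonneg by (intro bdd_belowI[of _ 0]) auto
  have "(INF \<rho>\<in>couplings (distr N borel X) (distr N borel Z). \<integral>p. (norm (fst p - snd p))\<^sup>2 \<partial>\<rho>)
      \<le> (\<integral>\<omega>. (norm (X \<omega> - Z \<omega>))\<^sup>2 \<partial>N)"
    using cINF_lower[OF bdd coupling] integral_\<pi> by simp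
  then show "W2 (distr N borel X) (distr N borel Z) \<le> sqrt (\<integral>\<omega>. (norm (X \<omega> - Z \<omega>))\<^sup>2 \<partial>N)"
    unfolding W2_def by (rule real_sqrt_le_mono)
  have "0 \<le> (INF \<rho>\<in>couplings (distr N borel X) (distr N borel Z). \<integral>p. (norm (fst p - snd p))\<^sup>2 \<partial>\<rho>)"
    using coupling nonneg by (intro cINF_greatest) auto
  then show "0 \<le> W2 (distr N borel X) (distr N borel Z)" unfolding W2_def by simp
qed

lemma W2_distr_tendsto_0:
  fixes X :: "nat \<Rightarrow> 'b \<Rightarrow> 'a::euclidean_space"
  assumes "prob_space N" "\<And>n. X n \<in> borel_measurable N" "Z \<in> borel_measurable N"
    and "(\<lambda>n. \<integral>\<omega>. (norm (X n \<omega> - Z \<omega>))\<^sup>2 \<partial>N) \<longlonglongrightarrow> 0"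
  shows "(\<lambda>n. W2 (distr N borel (X n)) (distr N borel Z)) \<longlonglongrightarrow> 0"
proof (rule real_tendsto_sandwich)
  show "\<forall>\<^sub>F n in sequentially. 0 \<le> W2 (distr N borel (X n)) (distr N borel Z)"
    using W2_distr_le(2)[OF assms(1-3)] by simp
  show "\<forall>\<^sub>F n in sequentially.
      W2 (distr N borel (X n)) (distr N borel Z) \<le> sqrt (\<integral>\<omega>. (norm (X n \<omega> - Z \<omega>))\<^sup>2 \<partial>N)"
    using W2_distr_le(1)[OF assms(1-3)] by simp
  show "(\<lambda>n. sqrt (\<integral>\<omega>. (norm (X n \<omega> - Z \<omega>))\<^sup>2 \<partial>N)) \<longlonglongrightarrow> 0"
    using tendsto_real_sqrt[OF assms(4)] by simp
qed simp

lemma continuous_W2D: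
  assumes "continuous_W2 W" and "\<mu> \<in> P2" "\<And>n. \<mu>s n \<in> P2" "(\<lambda>n. W2 (\<mu>s n) \<mu>) \<longlonglongrightarrow> 0"
  shows "(\<lambda>n. W x (\<mu>s n)) \<longlonglongrightarrow> W x \<mu>"
  using assms(1)[unfolded continuous_W2_def, rule_format, of \<mu> \<mu>s "\<lambda>_. x" x] assms(2-) by auto

subsection \<open>Cocoercivity on \<open>L\<^sup>2\<close>\<close>

definition L2_cocoercive :: "'w measure \<Rightarrow> ('a::euclidean_space \<Rightarrow> 'a measure \<Rightarrow> 'a) \<Rightarrow> real \<Rightarrow> bool"
  where "L2_cocoercive M W \<beta> \<longleftrightarrow> (\<forall>X\<in>L2 M. \<forall>Y\<in>L2 M.
    (\<integral>\<omega>. (W (X \<omega>) (law M X) - W (Y \<omega>) (law M Y)) \<bullet> (X \<omega> - Y \<omega>) \<partial>M)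
      \<ge> \<beta> * (\<integral>\<omega>. (norm (W (X \<omega>) (law M X) - W (Y \<omega>) (law M Y)))\<^sup>2 \<partial>M))"

context prob_space
begin

lemma integral_perturbation_le:
  fixes X0 :: "'a \<Rightarrow> 'b::euclidean_space"
  assumes X0: "simple_function M X0" and A: "A \<in> events"
  shows "(\<integral>\<omega>. (norm ((if \<omega> \<in> A then z else X0 \<omega>) - X0 \<omega>))\<^sup>2 \<partial>M)
    \<le> (\<Sum>v\<in>X0 ` space M. (norm (z - v))\<^sup>2) * prob A"
proof -
  define K where "K = (\<Sum>v\<in>X0 ` space M. (norm (z - v))\<^sup>2)"
  have "(\<integral>\<omega>. (norm ((if \<omega> \<in> A then z else X0 \<omega>) - X0 \<omega>))\<^sup>2 \<partial>M) \<le> (\<integral>\<omega>. K * indicator A \<omega> \<partial>M)"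
  proof (rule integral_mono)
    have "simple_function M (\<lambda>\<omega>. if \<omega> \<in> A then z else X0 \<omega>)"
      using A by (intro simple_function_If_set[OF simple_function_const X0]) simp
    from simple_function_compose2[OF this X0, of "\<lambda>a b. (norm (a - b))\<^sup>2"]
    show "integrable M (\<lambda>\<omega>. (norm ((if \<omega> \<in> A then z else X0 \<omega>) - X0 \<omega>))\<^sup>2)"
      by (rule simple_function_integrable)
    show "integrable M (\<lambda>\<omega>. K * indicator A \<omega>)"
      using A by (intro integrable_mult_right integrable_real_indicator) (auto simp: emeasure_eq_measure)
    show "(norm ((if \<omega> \<in> A then z else X0 \<omega>) - X0 \<omega>))\<^sup>2 \<le> K * indicator A \<omega>"
      if "\<omega> \<in> space M" for \<omega>
    proof (cases "\<omega> \<in> A")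
      case True
      have "(norm (z - X0 \<omega>))\<^sup>2 \<le> K"
        unfolding K_def using that X0
        by (intro member_le_sum[of "X0 \<omega>" _ "\<lambda>v. (norm (z - v))\<^sup>2"]) (auto simp: simple_function_def)
      then show ?thesis using True by simp
    qed simp
  qed
  also have "(\<integral>\<omega>. K * indicator A \<omega> \<partial>M) = K * prob A"
    using A by (simp add: Int_absorb2 sets.sets_into_space)
  finally show ?thesis unfolding K_def .
qed

lemma W2_law_perturbation_tendsto_0:
  fixes X0 :: "'a \<Rightarrow> 'b::euclidean_space"
  assumes X0: "simple_function M X0" and A: "\<And>n. A n \<in> events" "(\<lambda>n. prob (A n)) \<longlonglongrightarrow> 0"
  shows "(\<lambda>n. W2 (law M (\<lambda>\<omega>. if \<omega> \<in> A n then z else X0 \<omega>)) (law M X0)) \<longlonglongrightarrow> 0"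
proof -
  define Z where "Z n \<omega> = (if \<omega> \<in> A n then z else X0 \<omega>)" for n \<omega>
  define K where "K = (\<Sum>v\<in>X0 ` space M. (norm (z - v))\<^sup>2)"
  have "(\<lambda>n. \<integral>\<omega>. (norm (Z n \<omega> - X0 \<omega>))\<^sup>2 \<partial>M) \<longlonglongrightarrow> 0"
  proof (rule real_tendsto_sandwich[of "\<lambda>_. 0" _ _ "\<lambda>n. K * prob (A n)"])
    show "\<forall>\<^sub>F n in sequentially. 0 \<le> (\<integral>\<omega>. (norm (Z n \<omega> - X0 \<omega>))\<^sup>2 \<partial>M)"
      by (simp add: Bochner_Integration.integral_nonneg)
    show "\<forall>\<^sub>F n in sequentially. (\<integral>\<omega>. (norm (Z n \<omega> - X0 \<omega>))\<^sup>2 \<partial>M) \<le> K * prob (A n)"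
      unfolding Z_def K_def using integral_perturbation_le[OF X0 A(1)] by simp
    show "(\<lambda>n. K * prob (A n)) \<longlonglongrightarrow> 0" by (rule tendsto_mult_right_zero[OF A(2)])
  qed simp
  moreover have "Z n \<in> borel_measurable M" for n
    unfolding Z_def using X0 A(1)
    by (intro borel_measurable_simple_function simple_function_If_set) auto
  moreover have "X0 \<in> borel_measurable M" using X0 by (rule borel_measurable_simple_function)
  ultimately have "(\<lambda>n. W2 (distr M borel (Z n)) (distr M borel X0)) \<longlonglongrightarrow> 0"
    by (intro W2_distr_tendsto_0[OF prob_space_axioms])
  then show ?thesis unfolding law_def Z_def[abs_def] .
qed

lemma L2_cocoercive_perturbation:
  fixes X0 :: "'a \<Rightarrow> 'b::euclidean_space" and x y :: 'b
  assumes "L2_cocoercive M W \<beta>" "0 \<le> \<beta>" and X0: "simple_function M X0"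
    and A: "A \<in> events" "0 < prob A"
  defines "\<Delta> \<equiv> W x (law M (\<lambda>\<omega>. if \<omega> \<in> A then x else X0 \<omega>))
      - W y (law M (\<lambda>\<omega>. if \<omega> \<in> A then y else X0 \<omega>))"
  shows "\<beta> * (norm \<Delta>)\<^sup>2 \<le> \<Delta> \<bullet> (x - y)"
proof -
  define X where "X \<omega> = (if \<omega> \<in> A then x else X0 \<omega>)" for \<omega>
  define Y where "Y \<omega> = (if \<omega> \<in> A then y else X0 \<omega>)" for \<omega>
  have simple: "simple_function M X" "simple_function M Y"
    unfolding X_def Y_def using X0 A(1) by (auto intro: simple_function_If_set)
  define F where "F \<omega> = W (X \<omega>) (law M X) - W (Y \<omega>) (law M Y)" for \<omega>
  have prob_A: "measure M (A \<inter> space M) = prob A"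
    using A(1) by (simp add: Int_absorb2 sets.sets_into_space)
  have "(\<lambda>\<omega>. F \<omega> \<bullet> (X \<omega> - Y \<omega>)) = (\<lambda>\<omega>. \<Delta> \<bullet> (x - y) * indicator A \<omega>)"
    unfolding F_def X_def Y_def \<Delta>_def by (auto simp: indicator_def)
  then have inner: "(\<integral>\<omega>. F \<omega> \<bullet> (X \<omega> - Y \<omega>) \<partial>M) = \<Delta> \<bullet> (x - y) * prob A"
    using prob_A by simp
  have "(norm \<Delta>)\<^sup>2 * prob A = (\<integral>\<omega>. (norm \<Delta>)\<^sup>2 * indicator A \<omega> \<partial>M)"
    using prob_A by simp
  also have "\<dots> \<le> (\<integral>\<omega>. (norm (F \<omega>))\<^sup>2 \<partial>M)"
  proof (rule integral_mono)
    show "integrable M (\<lambda>\<omega>. (norm \<Delta>)\<^sup>2 * indicator A \<omega>)"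
      using A(1) by (intro integrable_mult_right integrable_real_indicator) (auto simp: emeasure_eq_measure)
    show "integrable M (\<lambda>\<omega>. (norm (F \<omega>))\<^sup>2)" unfolding F_def
      by (intro simple_function_integrable simple_function_compose2[OF simple])
    show "(norm \<Delta>)\<^sup>2 * indicator A \<omega> \<le> (norm (F \<omega>))\<^sup>2" for \<omega>
      unfolding F_def X_def Y_def \<Delta>_def by (auto simp: indicator_def)
  qed
  finally have "\<beta> * ((norm \<Delta>)\<^sup>2 * prob A) \<le> \<beta> * (\<integral>\<omega>. (norm (F \<omega>))\<^sup>2 \<partial>M)"
    using \<open>0 \<le> \<beta>\<close> by (rule mult_left_mono)
  also have "\<dots> \<le> (\<integral>\<omega>. F \<omega> \<bullet> (X \<omega> - Y \<omega>) \<partial>M)"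
    using assms(1) simple_function_L2[OF simple(1)] simple_function_L2[OF simple(2)]
    unfolding L2_cocoercive_def F_def by (elim ballE) (assumption | blast)+
  also have "\<dots> = \<Delta> \<bullet> (x - y) * prob A" by (rule inner)
  finally show ?thesis using A(2) by (simp add: mult.assoc[symmetric])
qed

lemma L2_cocoercive_dist_le_simple_law:
  fixes X0 :: "'a \<Rightarrow> 'b::euclidean_space"
  assumes "atomless M" "continuous_W2 W" "L2_cocoercive M W \<beta>" "\<beta> > 0"
    and X0: "simple_function M X0"
  shows "dist (W x (law M X0)) (W y (law M X0)) \<le> 1 / \<beta> * dist x y"
proof -
  obtain A where A: "\<And>n. A n \<in> events" "\<And>n. 0 < prob (A n)" "(\<lambda>n. prob (A n)) \<longlonglongrightarrow> 0"
    using atomless_events_prob_tendsto_0[OF \<open>atomless M\<close>] by blast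
  have W2_lim: "(\<lambda>n. W2 (law M (\<lambda>\<omega>. if \<omega> \<in> A n then z else X0 \<omega>)) (law M X0)) \<longlonglongrightarrow> 0" for z
    using X0 A(1,3) by (intro W2_law_perturbation_tendsto_0)
  have P2_perturbed: "law M (\<lambda>\<omega>. if \<omega> \<in> A n then z else X0 \<omega>) \<in> P2" for n z
    using X0 A(1) by (intro law_in_P2 simple_function_L2 simple_function_If_set) auto
  have P2_X0: "law M X0 \<in> P2" using X0 by (intro law_in_P2 simple_function_L2)
  define \<Delta> where "\<Delta> n = W x (law M (\<lambda>\<omega>. if \<omega> \<in> A n then x else X0 \<omega>))
      - W y (law M (\<lambda>\<omega>. if \<omega> \<in> A n then y else X0 \<omega>))" for n
  have \<Delta>_lim: "\<Delta> \<longlonglongrightarrow> W x (law M X0) - W y (law M X0)"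
    unfolding \<Delta>_def
    by (intro tendsto_diff continuous_W2D[OF \<open>continuous_W2 W\<close> P2_X0 P2_perturbed W2_lim])
  have "\<beta> * (norm (\<Delta> n))\<^sup>2 \<le> \<Delta> n \<bullet> (x - y)" for n
    unfolding \<Delta>_def using assms(3,4) X0 A(1,2) by (intro L2_cocoercive_perturbation) auto
  then have "\<forall>\<^sub>F n in sequentially. \<beta> * (norm (\<Delta> n))\<^sup>2 \<le> \<Delta> n \<bullet> (x - y)" by simp
  moreover have "(\<lambda>n. \<beta> * (norm (\<Delta> n))\<^sup>2) \<longlonglongrightarrow> \<beta> * (norm (W x (law M X0) - W y (law M X0)))\<^sup>2"
    using \<Delta>_lim by (intro tendsto_intros)
  moreover have "(\<lambda>n. \<Delta> n \<bullet> (x - y)) \<longlonglongrightarrow> (W x (law M X0) - W y (law M X0)) \<bullet> (x - y)"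
    using \<Delta>_lim by (intro tendsto_intros)
  ultimately have "\<beta> * (norm (W x (law M X0) - W y (law M X0)))\<^sup>2
      \<le> (W x (law M X0) - W y (law M X0)) \<bullet> (x - y)"
    using tendsto_le[OF sequentially_bot] by blast
  then show ?thesis using cocoercive_norm_le[OF \<open>\<beta> > 0\<close>] by (simp add: dist_norm)
qed

lemma atomless_simple_laws_W2_approx:
  assumes "atomless M" and "\<mu> \<in> P2"
  obtains X :: "nat \<Rightarrow> 'a \<Rightarrow> 'b::euclidean_space"
  where "\<And>n. simple_function M (X n)" "(\<lambda>n. W2 (law M (X n)) \<mu>) \<longlonglongrightarrow> 0"
proof -
  have \<mu>: "prob_space \<mu>" "sets \<mu> = sets borel" "integrable \<mu> (\<lambda>z. (norm z)\<^sup>2)"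
    using \<open>\<mu> \<in> P2\<close> by (auto simp: P2_def)
  have id_meas: "(\<lambda>z. z) \<in> borel_measurable \<mu>" using \<mu>(2) by (rule measurable_ident_sets)
  obtain F where F: "\<And>i. simple_function \<mu> (F i)" "(\<lambda>i. \<integral>z. (norm (F i z - z))\<^sup>2 \<partial>\<mu>) \<longlonglongrightarrow> 0"
    using simple_function_approx_L2[OF id_meas] \<mu>(3) by blast
  obtain X where X: "\<And>i. simple_function M (X i)" "\<And>i. distr M borel (X i) = distr \<mu> borel (F i)"
    using atomless_distr_simple_function[OF \<open>atomless M\<close> \<mu>(1) F(1)] by metis
  have "(\<lambda>i. W2 (distr \<mu> borel (F i)) (distr \<mu> borel (\<lambda>z. z))) \<longlonglongrightarrow> 0"
    using F by (intro W2_distr_tendsto_0[OF \<mu>(1) _ id_meas] borel_measurable_simple_function)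
  moreover have "distr \<mu> borel (\<lambda>z. z) = \<mu>" using \<mu>(2) by (intro distr_id2) simp
  ultimately have "(\<lambda>i. W2 (law M (X i)) \<mu>) \<longlonglongrightarrow> 0" by (simp add: law_def X(2))
  with X(1) show ?thesis by (rule that)
qed

lemma L2_cocoercive_lipschitz_on:
  assumes "atomless M" "continuous_W2 W" "L2_cocoercive M W \<beta>" "\<beta> > 0" and "\<mu> \<in> P2"
  shows "(1 / \<beta>)-lipschitz_on UNIV (\<lambda>x. W x \<mu>)"
proof (rule lipschitz_onI)
  fix x y :: 'b
  obtain X :: "nat \<Rightarrow> 'a \<Rightarrow> 'b" where X: "\<And>n. simple_function M (X n)" "(\<lambda>n. W2 (law M (X n)) \<mu>) \<longlonglongrightarrow> 0"
    using atomless_simple_laws_W2_approx[OF \<open>atomless M\<close> \<open>\<mu> \<in> P2\<close>] by blast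
  have "law M (X n) \<in> P2" for n using X(1) by (intro law_in_P2 simple_function_L2)
  then have "(\<lambda>n. dist (W x (law M (X n))) (W y (law M (X n)))) \<longlonglongrightarrow> dist (W x \<mu>) (W y \<mu>)"
    using X(2) \<open>\<mu> \<in> P2\<close> by (intro tendsto_dist continuous_W2D[OF \<open>continuous_W2 W\<close>])
  moreover have "dist (W x (law M (X n))) (W y (law M (X n))) \<le> 1 / \<beta> * dist x y" for n
    using assms(1-4) X(1) by (rule L2_cocoercive_dist_le_simple_law)
  ultimately show "dist (W x \<mu>) (W y \<mu>) \<le> 1 / \<beta> * dist x y"
    by (intro LIMSEQ_le_const2) auto
qed (use \<open>\<beta> > 0\<close> in simp)

end

theorem lemma4p7:
  fixes M :: "'w::polish_space measure"
    and W :: "'a::euclidean_space \<Rightarrow> 'a measure \<Rightarrow> 'a"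
    and \<beta> :: real
  assumes "prob_space M" and "sets M = sets borel" and "atomless M"
    and "continuous_W2 W"
    and "\<beta> > 0"
    and mono: "\<And>X Y. X \<in> L2 M \<Longrightarrow> Y \<in> L2 M \<Longrightarrow>
        (\<integral>\<omega>. (W (X \<omega>) (law M X) - W (Y \<omega>) (law M Y)) \<bullet> (X \<omega> - Y \<omega>) \<partial>M)
        \<ge> \<beta> * (\<integral>\<omega>. (norm (W (X \<omega>) (law M X) - W (Y \<omega>) (law M Y)))\<^sup>2 \<partial>M)"
  shows "(\<forall>X\<in>L2 M. \<forall>Y\<in>L2 M.
            (\<integral>\<omega>. (norm (W (X \<omega>) (law M X) - W (Y \<omega>) (law M Y)))\<^sup>2 \<partial>M)
            \<le> 1 / \<beta>\<^sup>2 * (\<integral>\<omega>. (norm (X \<omega> - Y \<omega>))\<^sup>2 \<partial>M))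
      \<and> (\<forall>\<mu>\<in>P2. (1 / \<beta>)-lipschitz_on UNIV (\<lambda>x. W x \<mu>))"
proof (intro conjI ballI)
  fix X Y :: "'w \<Rightarrow> 'a"
  assume "X \<in> L2 M" "Y \<in> L2 M"
  then show "(\<integral>\<omega>. (norm (W (X \<omega>) (law M X) - W (Y \<omega>) (law M Y)))\<^sup>2 \<partial>M)
      \<le> 1 / \<beta>\<^sup>2 * (\<integral>\<omega>. (norm (X \<omega> - Y \<omega>))\<^sup>2 \<partial>M)"
    by (intro cocoercive_integral_norm_sq_le[OF \<open>\<beta> > 0\<close> mono] integrable_norm_diff_sq_L2)
next
  fix \<mu> :: "'a measure"
  assume "\<mu> \<in> P2"
  moreover have "L2_cocoercive M W \<beta>" using mono by (simp add: L2_cocoercive_def)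
  ultimately show "(1 / \<beta>)-lipschitz_on UNIV (\<lambda>x. W x \<mu>)"
    using prob_space.L2_cocoercive_lipschitz_on[OF \<open>prob_space M\<close> \<open>atomless M\<close> \<open>continuous_W2 W\<close>] \<open>\<beta> > 0\<close>
    by blast
qed

end
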